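(* Let $d,r$ be nonnegative integers such that $r\le\binom{m+d}{d}-r_d$. Then $e_{r+r_d}(d,m)=\overline{e}_r(d,m)$. In particular, $e_r(d,m)=\overline{e}_r(d,m)$ if $d\le q$.
   Context: Let $q$ be a prime power, $\mathbb{F}_q$ the finite field with $q$ elements, $m$ a positive integer. A monomial $\mu\neq1$ in $x_0,\dots,x_m$ written $x_0^{a_0}\cdots x_\ell^{a_\ell}$ with $a_\ell>0$ is projectively reduced if $a_0,\dots,a_{\ell-1}\le q-1$; $1$ is also projectively reduced; a polynomial is projectively reduced if it is an $\mathbb{F}_q$-linear combination of projectively reduced monomials. $r_d$ is the $\mathbb{F}_q$-dimension of the degree-$d$ homogeneous component of the ideal generated by $\{x_i^qx_j-x_ix_j^q:0\le i<j\le m\}$ (this ideal consists of the polynomials generated by homogeneous ones vanishing on $\mathbb{P}^m(\mathbb{F}_q)$; $r_d=0$ for $d\le q$). $e_s(d,m)$ is the maximum of $|V(F_1,\dots,F_s)(\mathbb{F}_q)|$ (the number of points of $\mathbb{P}^m(\mathbb{F}_q)$ where all $F_i$ vanish) over families of $s$ linearly independent homogeneous degree-$d$ polynomials; $\overline{e}_s(d,m)$ is the same maximum restricted to families of $s$ linearly independent projectively reduced homogeneous degree-$d$ polynomials. For $s=0$ the only family is the empty one, giving the value $|\mathbb{P}^m(\mathbb{F}_q)|$. *)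

theory Defs
  imports Main "HOL.Vector_Spaces" "HOL-Library.Function_Algebras" "HOL-Library.Cardinality"
begin

text \<open>Polynomials in the variables x_0,...,x_m over a field are represented by their
coefficient functions on exponent vectors (nat \<Rightarrow> nat); a point of F_q^(m+1) is a
function nat \<Rightarrow> 'a (coordinates beyond m are zero). The finite field F_q is a type
'a of class finite and field, with q = CARD('a).\<close>

definition Mon :: "nat \<Rightarrow> nat \<Rightarrow> (nat \<Rightarrow> nat) set" where
  "Mon d m = {a. (\<forall>i>m. a i = 0) \<and> (\<Sum>i\<le>m. a i) = d}"

definition hom_polys :: "nat \<Rightarrow> nat \<Rightarrow> ((nat \<Rightarrow> nat) \<Rightarrow> 'a::zero) set" where
  "hom_polys d m = {f. \<forall>a. f a \<noteq> 0 \<longrightarrow> a \<in> Mon d m}"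

definition proj_reduced_mon :: "nat \<Rightarrow> (nat \<Rightarrow> nat) \<Rightarrow> bool" where
  "proj_reduced_mon q a \<longleftrightarrow> (\<forall>i. (\<exists>j>i. 0 < a j) \<longrightarrow> a i \<le> q - 1)"

definition proj_reduced_polys :: "nat \<Rightarrow> ((nat \<Rightarrow> nat) \<Rightarrow> 'a::zero) set" where
  "proj_reduced_polys q = {f. \<forall>a. f a \<noteq> 0 \<longrightarrow> proj_reduced_mon q a}"

definition lin_indep_family :: "nat \<Rightarrow> (nat \<Rightarrow> ((nat \<Rightarrow> nat) \<Rightarrow> 'a::field)) \<Rightarrow> bool" where
  "lin_indep_family s F \<longleftrightarrow>
     (\<forall>c. (\<forall>a. (\<Sum>i<s. c i * F i a) = 0) \<longrightarrow> (\<forall>i<s. c i = 0))"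

definition peval :: "nat \<Rightarrow> ((nat \<Rightarrow> nat) \<Rightarrow> 'a::comm_ring_1) \<Rightarrow> (nat \<Rightarrow> 'a) \<Rightarrow> 'a" where
  "peval m f x = (\<Sum>a\<in>{a. f a \<noteq> 0}. f a * (\<Prod>i\<le>m. x i ^ a i))"

definition proj_space :: "nat \<Rightarrow> (nat \<Rightarrow> 'a::field) set set" where
  "proj_space m = {{(\<lambda>i. c * x i) | c. c \<noteq> 0} | x. (\<forall>i>m. x i = 0) \<and> x \<noteq> 0}"

definition zero_set :: "nat \<Rightarrow> nat \<Rightarrow> (nat \<Rightarrow> ((nat \<Rightarrow> nat) \<Rightarrow> 'a::field)) \<Rightarrow> (nat \<Rightarrow> 'a) set set" where
  "zero_set m s F = {P \<in> proj_space m. \<forall>x\<in>P. \<forall>i<s. peval m (F i) x = 0}"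

definition e_max :: "'a::{finite,field} itself \<Rightarrow> nat \<Rightarrow> nat \<Rightarrow> nat \<Rightarrow> nat" where
  "e_max T s d m = Max {card (zero_set m s F) | F :: nat \<Rightarrow> ((nat \<Rightarrow> nat) \<Rightarrow> 'a).
       (\<forall>i<s. F i \<in> hom_polys d m) \<and> lin_indep_family s F}"

definition e_bar :: "'a::{finite,field} itself \<Rightarrow> nat \<Rightarrow> nat \<Rightarrow> nat \<Rightarrow> nat" where
  "e_bar T s d m = Max {card (zero_set m s F) | F :: nat \<Rightarrow> ((nat \<Rightarrow> nat) \<Rightarrow> 'a).
       (\<forall>i<s. F i \<in> hom_polys d m \<and> F i \<in> proj_reduced_polys (CARD('a))) \<and> lin_indep_family s F}"

definition mon_vec :: "(nat \<Rightarrow> nat) \<Rightarrow> ((nat \<Rightarrow> nat) \<Rightarrow> 'a::{zero,one})" where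
  "mon_vec e = (\<lambda>a. if a = e then 1 else 0)"

text \<open>Degree-d monomial multiples x^b (x_i^q x_j - x_i x_j^q), i < j \<le> m; they span the
degree-d homogeneous component of the ideal generated by the x_i^q x_j - x_i x_j^q.\<close>
definition ideal_gens :: "'a::{finite,field} itself \<Rightarrow> nat \<Rightarrow> nat \<Rightarrow> ((nat \<Rightarrow> nat) \<Rightarrow> 'a) set" where
  "ideal_gens T d m =
    {(\<lambda>a. mon_vec (\<lambda>k. b k + (if k = i then CARD('a) else 0) + (if k = j then 1 else 0)) a
         - mon_vec (\<lambda>k. b k + (if k = i then 1 else 0) + (if k = j then CARD('a) else 0)) a)
     | b i j. i < j \<and> j \<le> m \<and> CARD('a) + 1 \<le> d \<and> b \<in> Mon (d - (CARD('a) + 1)) m}"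

definition pscale :: "'a::field \<Rightarrow> ((nat \<Rightarrow> nat) \<Rightarrow> 'a) \<Rightarrow> ((nat \<Rightarrow> nat) \<Rightarrow> 'a)" where
  "pscale c f = (\<lambda>a. c * f a)"

definition r_dim :: "'a::{finite,field} itself \<Rightarrow> nat \<Rightarrow> nat \<Rightarrow> nat" where
  "r_dim T d m = vector_space.dim (pscale :: 'a \<Rightarrow> _) (module.span (pscale :: 'a \<Rightarrow> _) (ideal_gens T d m))"

end

theory Submission
  imports Defs "HOL-Computational_Algebra.Polynomial"
begin

(* Write H_d for the forms of degree d, R_d for the projectively reduced ones and I_d for the
   degree-d part of the ideal, so that r_d = dim I_d.  Every element of I_d vanishes on all of
   F_q^(m+1), because x_i^q x_j - x_i x_j^q does.  Conversely, a reduced form vanishing everywhere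
   is zero: on the chart x_l = 1, x_j = 0 (j > l) its monomials ending in x_l become distinct
   monomials in x_0, ..., x_(l-1) with all exponents below q, and such a polynomial vanishing on
   F_q^l is zero.  Rewriting x_i^q x_j into x_i x_j^q (i < j) reduces every form modulo I_d, so
   H_d = R_d + I_d and R_d meets I_d only in 0.
   Hence r independent reduced forms together with a basis of I_d are r + r_d independent forms
   with the same zeros; conversely, among r + r_d independent forms some r are independent
   modulo I_d, and their reductions are r independent reduced forms vanishing wherever the
   given forms do. *)

section \<open>Finite fields\<close>

lemma finite_field_power_card:
  fixes x :: "'a::{finite,field}"
  shows "x ^ CARD('a) = x"
proof (cases "x = 0")
  case True
  then show ?thesis by (simp add: zero_power finite_UNIV_card_ge_0)
next
  case False
  let ?U = "UNIV - {0} :: 'a set"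
  have inj: "inj_on ((*) x) ?U" using False by (auto simp: inj_on_def)
  have "(*) x ` ?U = ?U"
  proof (rule card_subset_eq)
    show "(*) x ` ?U \<subseteq> ?U" using False by auto
  qed (simp_all add: card_image[OF inj])
  then have "prod id ?U = (\<Prod>y\<in>?U. x * y)"
    using prod.reindex[OF inj, of id] by simp
  also have "\<dots> = x ^ card ?U * prod id ?U"
    by (simp add: prod.distrib)
  finally have "x ^ card ?U = 1"
    by (simp add: mult_cancel_right1)
  moreover have "CARD('a) = Suc (card ?U)"
    by (simp add: card_Diff_singleton finite_UNIV_card_ge_0)
  ultimately show ?thesis by (metis power_Suc mult_1_right)
qed

lemma two_le_card_field: "2 \<le> CARD('a::{finite,field})"
proof -
  have "card {0::'a, 1} \<le> CARD('a)" by (rule card_mono) auto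
  then show ?thesis by simp
qed

section \<open>Forms of degree d as a vector space\<close>

interpretation V: vector_space "pscale :: 'a::field \<Rightarrow> ((nat \<Rightarrow> nat) \<Rightarrow> 'a) \<Rightarrow> _"
  by unfold_locales (auto simp: pscale_def fun_eq_iff algebra_simps)

lemma sum_apply: "(\<Sum>i\<in>A. f i) a = (\<Sum>i\<in>A. f i a)"
  by (induction A rule: infinite_finite_induct) auto

lemma sum_pscale_apply: "(\<Sum>i\<in>A. pscale (c i) (f i)) a = (\<Sum>i\<in>A. c i * f i a)"
  by (simp add: sum_apply pscale_def)

definition bounded_exps :: "nat \<Rightarrow> nat \<Rightarrow> (nat \<Rightarrow> nat) set" where
  "bounded_exps q n = {a. \<forall>i. (i < n \<longrightarrow> a i < q) \<and> (n \<le> i \<longrightarrow> a i = 0)}"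

lemma finite_bounded_exps: "finite (bounded_exps q n)"
proof -
  have "bounded_exps q n = {a. \<forall>i. (i \<in> {..<n} \<longrightarrow> a i \<in> {..<q}) \<and> (i \<notin> {..<n} \<longrightarrow> a i = 0)}"
    by (auto simp: bounded_exps_def)
  then show ?thesis by (simp only:) (intro finite_set_of_finite_funs finite_lessThan)
qed

lemma finite_Mon: "finite (Mon d m)"
proof (rule finite_subset[OF _ finite_bounded_exps])
  show "Mon d m \<subseteq> bounded_exps (Suc d) (Suc m)"
  proof
    fix a assume a: "a \<in> Mon d m"
    have "a i \<le> d" if "i \<le> m" for i
      using a member_le_sum[of i "{..m}" a] that by (simp add: Mon_def)
    then show "a \<in> bounded_exps (Suc d) (Suc m)"
      using a by (auto simp: Mon_def bounded_exps_def less_Suc_eq_le)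
  qed
qed

lemma Mon_nonzero_le: "a \<in> Mon d m \<Longrightarrow> a j \<noteq> 0 \<Longrightarrow> j \<le> m"
  by (cases "j \<le> m") (auto simp: Mon_def)

lemma peval_hom:
  assumes "f \<in> hom_polys d m"
  shows "peval m f x = (\<Sum>a\<in>Mon d m. f a * (\<Prod>i\<le>m. x i ^ a i))"
  unfolding peval_def using assms finite_Mon by (intro sum.mono_neutral_left) (auto simp: hom_polys_def)

lemma peval_mon_vec: "peval m (mon_vec a) x = (\<Prod>i\<le>m. x i ^ a i)"
proof -
  have "{b. (mon_vec a b :: 'a) \<noteq> 0} = {a}" by (auto simp: mon_vec_def)
  then show ?thesis by (simp add: peval_def mon_vec_def)
qed

lemma subspace_hom_polys: "V.subspace (hom_polys d m :: ((nat \<Rightarrow> nat) \<Rightarrow> 'a::field) set)"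
  unfolding V.subspace_def hom_polys_def pscale_def by (auto, metis add.right_neutral)

lemma subspace_proj_reduced_polys: "V.subspace (proj_reduced_polys q :: ((nat \<Rightarrow> nat) \<Rightarrow> 'a::field) set)"
  unfolding V.subspace_def proj_reduced_polys_def pscale_def by (auto, metis add.right_neutral)

lemma peval_add:
  fixes f g :: "(nat \<Rightarrow> nat) \<Rightarrow> 'a::field"
  assumes "f \<in> hom_polys d m" "g \<in> hom_polys d m"
  shows "peval m (f + g) x = peval m f x + peval m g x"
  by (simp only: peval_hom[OF assms(1)] peval_hom[OF assms(2)]
      peval_hom[OF V.subspace_add[OF subspace_hom_polys assms]])
    (simp add: sum.distrib distrib_right)

lemma peval_diff:
  fixes f g :: "(nat \<Rightarrow> nat) \<Rightarrow> 'a::field"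
  assumes "f \<in> hom_polys d m" "g \<in> hom_polys d m"
  shows "peval m (f - g) x = peval m f x - peval m g x"
  by (simp only: peval_hom[OF assms(1)] peval_hom[OF assms(2)]
      peval_hom[OF V.subspace_diff[OF subspace_hom_polys assms]])
    (simp add: sum_subtractf left_diff_distrib)

lemma peval_pscale:
  fixes f :: "(nat \<Rightarrow> nat) \<Rightarrow> 'a::field"
  assumes "f \<in> hom_polys d m"
  shows "peval m (pscale c f) x = c * peval m f x"
  by (simp only: peval_hom[OF assms] peval_hom[OF V.subspace_scale[OF subspace_hom_polys assms]])
    (simp add: sum_distrib_left pscale_def mult.assoc)

lemma subspace_vanishing_hom_polys:
  "V.subspace {f :: (nat \<Rightarrow> nat) \<Rightarrow> 'a::field. f \<in> hom_polys d m \<and> (\<forall>x. peval m f x = 0)}"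
  using subspace_hom_polys[of d m]
  by (auto simp: V.subspace_def peval_add peval_pscale) (simp add: peval_def)

section \<open>The ideal vanishes everywhere\<close>

definition shift_exps :: "(nat \<Rightarrow> nat) \<Rightarrow> nat \<Rightarrow> nat \<Rightarrow> nat \<Rightarrow> nat \<Rightarrow> nat \<Rightarrow> nat" where
  "shift_exps b i s j t = (\<lambda>k. b k + (if k = i then s else 0) + (if k = j then t else 0))"

lemma ideal_gens_eq:
  "ideal_gens TYPE('a::{finite,field}) d m =
    {mon_vec (shift_exps b i CARD('a) j 1) - mon_vec (shift_exps b i 1 j CARD('a)) | b i j.
       i < j \<and> j \<le> m \<and> CARD('a) + 1 \<le> d \<and> b \<in> Mon (d - (CARD('a) + 1)) m}"
  unfolding ideal_gens_def shift_exps_def fun_diff_def ..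

lemma sum_shift_exps:
  assumes "i \<le> m" "j \<le> m" "i \<noteq> j"
  shows "(\<Sum>k\<le>m. shift_exps b i s j t k) = (\<Sum>k\<le>m. b k) + s + t"
  using assms by (simp add: shift_exps_def sum.distrib)

lemma Mon_shift_exps:
  assumes "b \<in> Mon n m" "i \<le> m" "j \<le> m" "i \<noteq> j"
  shows "shift_exps b i s j t \<in> Mon (n + s + t) m"
  using assms sum_shift_exps[OF assms(2-4)] by (auto simp: Mon_def shift_exps_def)

lemma prod_power_shift_exps:
  fixes x :: "nat \<Rightarrow> 'a::comm_monoid_mult"
  assumes "i \<le> m" "j \<le> m" "i \<noteq> j"
  shows "(\<Prod>k\<le>m. x k ^ shift_exps b i s j t k) = (\<Prod>k\<le>m. x k ^ b k) * x i ^ s * x j ^ t"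
proof -
  have delta: "(\<Prod>k\<le>m. x k ^ (if k = l then n else 0)) = x l ^ n" if "l \<le> m" for l n
  proof -
    have "(\<Prod>k\<le>m. x k ^ (if k = l then n else 0)) = (\<Prod>k\<le>m. if k = l then x l ^ n else 1)"
      by (rule prod.cong) auto
    then show ?thesis using that by simp
  qed
  show ?thesis
    using assms by (simp add: shift_exps_def power_add prod.distrib delta)
qed

lemma ideal_gens_vanish:
  assumes "g \<in> ideal_gens TYPE('a::{finite,field}) d m"
  shows "g \<in> hom_polys d m \<and> (\<forall>x. peval m g x = 0)"
proof -
  let ?q = "CARD('a)"
  obtain b i j where ij: "i < j" "j \<le> m" and d: "?q + 1 \<le> d" and b: "b \<in> Mon (d - (?q + 1)) m"
    and g: "g = mon_vec (shift_exps b i ?q j 1) - mon_vec (shift_exps b i 1 j ?q)"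
    using assms unfolding ideal_gens_eq by blast
  have "shift_exps b i ?q j 1 \<in> Mon d m" "shift_exps b i 1 j ?q \<in> Mon d m"
    using Mon_shift_exps[OF b, of i j ?q 1] Mon_shift_exps[OF b, of i j 1 ?q] ij d by simp_all
  then have hom: "mon_vec (shift_exps b i ?q j 1) \<in> hom_polys d m"
    "mon_vec (shift_exps b i 1 j ?q) \<in> hom_polys d m"
    by (auto simp: hom_polys_def mon_vec_def)
  have "peval m g x = 0" for x :: "nat \<Rightarrow> 'a"
  proof -
    have "peval m g x = peval m (mon_vec (shift_exps b i ?q j 1)) x - peval m (mon_vec (shift_exps b i 1 j ?q)) x"
      unfolding g by (rule peval_diff[OF hom])
    also have "\<dots> = 0"
      using ij by (simp add: peval_mon_vec prod_power_shift_exps finite_field_power_card mult.commute)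
    finally show ?thesis .
  qed
  then show ?thesis
    using g V.subspace_diff[OF subspace_hom_polys hom] by blast
qed

lemma span_ideal_gens_vanish:
  "V.span (ideal_gens TYPE('a::{finite,field}) d m) \<subseteq> {f. f \<in> hom_polys d m \<and> (\<forall>x. peval m f x = 0)}"
  using ideal_gens_vanish by (intro V.span_minimal subspace_vanishing_hom_polys) blast

lemma finite_ideal_gens: "finite (ideal_gens TYPE('a::{finite,field}) d m)"
proof (rule finite_subset)
  let ?gen = "\<lambda>(b, i, j). mon_vec (shift_exps b i CARD('a) j 1) - mon_vec (shift_exps b i 1 j CARD('a))
    :: (nat \<Rightarrow> nat) \<Rightarrow> 'a"
  show "ideal_gens TYPE('a) d m \<subseteq> ?gen ` (Mon (d - (CARD('a) + 1)) m \<times> {..m} \<times> {..m})"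
  proof
    fix g assume "g \<in> ideal_gens TYPE('a) d m"
    then obtain b i j where "i < j" "j \<le> m" "b \<in> Mon (d - (CARD('a) + 1)) m"
      and "g = mon_vec (shift_exps b i CARD('a) j 1) - mon_vec (shift_exps b i 1 j CARD('a))"
      unfolding ideal_gens_eq by blast
    then show "g \<in> ?gen ` (Mon (d - (CARD('a) + 1)) m \<times> {..m} \<times> {..m})"
      by (intro image_eqI[of _ _ "(b, i, j)"]) auto
  qed
  show "finite (?gen ` (Mon (d - (CARD('a) + 1)) m \<times> {..m} \<times> {..m}))"
    using finite_Mon by simp
qed

lemma obtain_basis_span_ideal_gens:
  obtains B :: "((nat \<Rightarrow> nat) \<Rightarrow> 'a::{finite,field}) set"
  where "V.independent B" "finite B" "card B = r_dim TYPE('a) d m"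
    "V.span B = V.span (ideal_gens TYPE('a) d m)"
proof -
  let ?I = "V.span (ideal_gens TYPE('a) d m)"
  obtain B where B: "B \<subseteq> ?I" "V.independent B" "?I \<subseteq> V.span B" "card B = V.dim ?I"
    by (rule V.basis_exists)
  have "finite B"
    using V.independent_span_bound[OF finite_ideal_gens B(2,1)] by blast
  moreover have "V.span B = ?I"
    using B(1,3) V.span_minimal[OF B(1) V.subspace_span] by blast
  ultimately show ?thesis
    using that B(2,4) unfolding r_dim_def by blast
qed

lemma r_dim_eq_0:
  assumes "d \<le> CARD('a::{finite,field})"
  shows "r_dim TYPE('a) d m = 0"
proof -
  have "ideal_gens TYPE('a) d m = {}"
    using assms by (auto simp: ideal_gens_def)
  then show ?thesis
    unfolding r_dim_def V.dim_span using V.dim_eq_card_independent[OF V.independent_empty] by simp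
qed

section \<open>Reduction modulo the ideal\<close>

lemma add_mult_less_mult_add:
  fixes u v q :: nat
  assumes "v < u" "2 \<le> q"
  shows "u + q * v < q * u + v"
proof -
  obtain w where u: "u = v + w" and w: "0 < w"
    using assms(1) less_imp_add_positive by blast
  have "w < q * w"
    using assms(2) w by simp
  then show ?thesis
    unfolding u by (simp add: distrib_left)
qed

(* Rewriting x_i^q x_j into x_i x_j^q with i < j lowers this weight, so reduction terminates. *)
definition exps_weight :: "nat \<Rightarrow> (nat \<Rightarrow> nat) \<Rightarrow> nat" where
  "exps_weight m a = (\<Sum>k\<le>m. a k * (m - k))"

lemma exps_weight_shift_exps:
  assumes "i \<le> m" "j \<le> m" "i \<noteq> j"
  shows "exps_weight m (shift_exps b i s j t) = exps_weight m b + s * (m - i) + t * (m - j)"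
proof -
  have delta: "(\<Sum>k\<le>m. (if k = l then n else 0) * (m - k)) = n * (m - l)" if "l \<le> m" for l n
  proof -
    have "(\<Sum>k\<le>m. (if k = l then n else 0) * (m - k)) = (\<Sum>k\<le>m. if k = l then n * (m - l) else 0)"
      by (rule sum.cong) auto
    then show ?thesis using that by simp
  qed
  show ?thesis
    using assms by (simp add: exps_weight_def shift_exps_def sum.distrib distrib_right delta)
qed

lemma not_proj_reduced_monE:
  assumes a: "a \<in> Mon d m" and not_reduced: "\<not> proj_reduced_mon q a"
  obtains b i j where "i < j" "j \<le> m" "q + 1 \<le> d" "b \<in> Mon (d - (q + 1)) m"
    "a = shift_exps b i q j 1"
proof -
  obtain i j where ij: "i < j" "0 < a j" "q \<le> a i"
    using not_reduced unfolding proj_reduced_mon_def by force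
  have j: "j \<le> m"
    using Mon_nonzero_le[OF a] ij(2) by simp
  define b where "b = (\<lambda>k. a k - (if k = i then q else 0) - (if k = j then 1 else 0))"
  have ab: "a = shift_exps b i q j 1"
    using ij by (auto simp: b_def shift_exps_def fun_eq_iff)
  have "d = (\<Sum>k\<le>m. shift_exps b i q j 1 k)"
    using a unfolding ab by (simp add: Mon_def)
  also have "\<dots> = (\<Sum>k\<le>m. b k) + q + 1"
    using ij j by (intro sum_shift_exps) auto
  finally have d: "d = (\<Sum>k\<le>m. b k) + q + 1" .
  moreover have "\<forall>k>m. b k = 0"
    using a by (simp add: Mon_def b_def)
  ultimately have "b \<in> Mon (d - (q + 1)) m"
    by (simp add: Mon_def)
  moreover have "q + 1 \<le> d"
    using d by linarith
  ultimately show ?thesis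
    using that[OF ij(1) j _ _ ab] by blast
qed

lemma ideal_gens_memI:
  assumes "i < j" "j \<le> m" "CARD('a::{finite,field}) + 1 \<le> d" "b \<in> Mon (d - (CARD('a) + 1)) m"
  shows "(mon_vec (shift_exps b i CARD('a) j 1) - mon_vec (shift_exps b i 1 j CARD('a)) :: (nat \<Rightarrow> nat) \<Rightarrow> 'a)
           \<in> ideal_gens TYPE('a) d m"
  using assms unfolding ideal_gens_eq by blast

lemma ex_reduced_congruent_mon_vec:
  assumes "a \<in> Mon d m"
  shows "\<exists>g \<in> hom_polys d m \<inter> proj_reduced_polys CARD('a).
           (mon_vec a - g :: (nat \<Rightarrow> nat) \<Rightarrow> 'a::{finite,field}) \<in> V.span (ideal_gens TYPE('a) d m)"
  using assms
proof (induction "exps_weight m a" arbitrary: a rule: less_induct)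
  case less
  let ?q = "CARD('a)"
  show ?case
  proof (cases "proj_reduced_mon ?q a")
    case True
    then have "mon_vec a \<in> hom_polys d m \<inter> proj_reduced_polys ?q"
      using less.prems by (auto simp: hom_polys_def proj_reduced_polys_def mon_vec_def)
    then show ?thesis
      by (intro bexI[of _ "mon_vec a"]) (simp_all add: V.span_zero)
  next
    case False
    obtain b i j where ij: "i < j" "j \<le> m" and d: "?q + 1 \<le> d"
      and b: "b \<in> Mon (d - (?q + 1)) m" and a: "a = shift_exps b i ?q j 1"
      using less.prems False by (rule not_proj_reduced_monE)
    define a' where "a' = shift_exps b i 1 j ?q"
    have gen: "mon_vec a - mon_vec a' \<in> ideal_gens TYPE('a) d m"
      unfolding a a'_def by (rule ideal_gens_memI[OF ij d b])
    have "a' \<in> Mon d m"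
      using Mon_shift_exps[OF b, of i j 1 ?q] ij d by (simp add: a'_def)
    moreover have "exps_weight m a' < exps_weight m a"
    proof -
      have "(m - i) + ?q * (m - j) < ?q * (m - i) + (m - j)"
        using ij two_le_card_field[where 'a='a] by (intro add_mult_less_mult_add) auto
      then show ?thesis
        using ij by (simp add: a a'_def exps_weight_shift_exps)
    qed
    ultimately obtain g where g: "g \<in> hom_polys d m \<inter> proj_reduced_polys ?q"
      "mon_vec a' - g \<in> V.span (ideal_gens TYPE('a) d m)"
      using less.hyps by blast
    have "mon_vec a - g \<in> V.span (ideal_gens TYPE('a) d m)"
      using V.span_add[OF V.span_base[OF gen] g(2)] by simp
    with g(1) show ?thesis by blast
  qed
qed

lemma hom_poly_eq_sum_mon_vec:
  assumes "(f :: (nat \<Rightarrow> nat) \<Rightarrow> 'a::field) \<in> hom_polys d m"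
  shows "f = (\<Sum>a\<in>Mon d m. pscale (f a) (mon_vec a))"
proof
  fix x
  have "(\<Sum>a\<in>Mon d m. pscale (f a) (mon_vec a)) x = (\<Sum>a\<in>Mon d m. if a = x then f x else 0)"
    unfolding sum_pscale_apply by (rule sum.cong) (auto simp: mon_vec_def)
  then show "f x = (\<Sum>a\<in>Mon d m. pscale (f a) (mon_vec a)) x"
    using assms finite_Mon by (auto simp: hom_polys_def)
qed

lemma ex_reduced_congruent:
  fixes f :: "(nat \<Rightarrow> nat) \<Rightarrow> 'a::{finite,field}"
  assumes f: "f \<in> hom_polys d m"
  shows "\<exists>g \<in> hom_polys d m \<inter> proj_reduced_polys CARD('a). f - g \<in> V.span (ideal_gens TYPE('a) d m)"
proof -
  let ?R = "hom_polys d m \<inter> proj_reduced_polys CARD('a) :: ((nat \<Rightarrow> nat) \<Rightarrow> 'a) set"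
  have "\<forall>a\<in>Mon d m. \<exists>g. g \<in> ?R \<and> mon_vec a - g \<in> V.span (ideal_gens TYPE('a) d m)"
    using ex_reduced_congruent_mon_vec by blast
  then obtain G where G: "\<forall>a\<in>Mon d m. G a \<in> ?R \<and> mon_vec a - G a \<in> V.span (ideal_gens TYPE('a) d m)"
    by (auto dest!: bchoice)
  define g where "g = (\<Sum>a\<in>Mon d m. pscale (f a) (G a))"
  have "g \<in> ?R"
    unfolding g_def using G
    by (intro V.subspace_sum V.subspace_scale V.subspace_inter subspace_hom_polys subspace_proj_reduced_polys) auto
  moreover have "f - g = (\<Sum>a\<in>Mon d m. pscale (f a) (mon_vec a - G a))"
    by (subst hom_poly_eq_sum_mon_vec[OF f]) (simp add: g_def sum_subtractf V.scale_right_diff_distrib)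
  then have "f - g \<in> V.span (ideal_gens TYPE('a) d m)"
    using G by (auto intro!: V.span_sum V.span_scale)
  ultimately show ?thesis by blast
qed

section \<open>Reduced forms vanishing everywhere\<close>

lemma coeffs_zero_if_vanishes_univariate:
  fixes c :: "nat \<Rightarrow> 'a::{finite,field}"
  assumes "\<And>t. (\<Sum>k<CARD('a). c k * t ^ k) = 0" and "k < CARD('a)"
  shows "c k = 0"
proof -
  define p where "p = (\<Sum>k<CARD('a). monom (c k) k)"
  have "p = 0"
  proof (rule ccontr)
    assume "p \<noteq> 0"
    then have "card {x. poly p x = 0} \<le> degree p"
      by (rule card_poly_roots_bound)
    moreover have "{x. poly p x = 0} = UNIV"
      using assms(1) by (simp add: p_def poly_sum poly_monom)
    moreover have "degree p \<le> CARD('a) - 1"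
      unfolding p_def by (rule degree_sum_le) (auto intro: order.trans[OF degree_monom_le])
    ultimately show False
      using two_le_card_field[where 'a='a] by simp
  qed
  then have "coeff p k = 0" by simp
  then show ?thesis
    using assms(2) by (simp add: p_def coeff_sum)
qed

lemma bounded_exps_Suc:
  "bounded_exps q (Suc n) = (\<lambda>(a, k). a(n := k)) ` (bounded_exps q n \<times> {..<q})"
proof
  show "bounded_exps q (Suc n) \<subseteq> (\<lambda>(a, k). a(n := k)) ` (bounded_exps q n \<times> {..<q})"
  proof
    fix a assume "a \<in> bounded_exps q (Suc n)"
    then show "a \<in> (\<lambda>(a, k). a(n := k)) ` (bounded_exps q n \<times> {..<q})"
      by (intro image_eqI[of _ _ "(a(n := 0), a n)"]) (auto simp: bounded_exps_def)
  qed
qed (auto simp: bounded_exps_def)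

lemma inj_on_bounded_exps_Suc: "inj_on (\<lambda>(a, k). a(n := k)) (bounded_exps q n \<times> {..<q})"
proof (rule inj_onI, clarify)
  fix a k a' k'
  assume "a \<in> bounded_exps q n" "a' \<in> bounded_exps q n" "a(n := k) = a'(n := k')"
  then show "a = a' \<and> k = k'"
    by (auto simp: bounded_exps_def fun_eq_iff) (metis order_refl, metis)
qed

lemma sum_bounded_exps_Suc:
  fixes c :: "(nat \<Rightarrow> nat) \<Rightarrow> 'a::comm_semiring_1"
  shows "(\<Sum>a\<in>bounded_exps q (Suc n). c a * (\<Prod>i<Suc n. x i ^ a i))
     = (\<Sum>k<q. (\<Sum>a\<in>bounded_exps q n. c (a(n := k)) * (\<Prod>i<n. x i ^ a i)) * x n ^ k)"
proof -
  have prod_upd: "(\<Prod>i<n. x i ^ (a(n := k)) i) = (\<Prod>i<n. x i ^ a i)" for a k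
    by (rule prod.cong) auto
  have "(\<Sum>a\<in>bounded_exps q (Suc n). c a * (\<Prod>i<Suc n. x i ^ a i))
     = (\<Sum>(a, k)\<in>bounded_exps q n \<times> {..<q}. c (a(n := k)) * (\<Prod>i<Suc n. x i ^ (a(n := k)) i))"
    unfolding bounded_exps_Suc by (subst sum.reindex[OF inj_on_bounded_exps_Suc]) (simp add: case_prod_beta')
  also have "\<dots> = (\<Sum>a\<in>bounded_exps q n. \<Sum>k<q. c (a(n := k)) * (\<Prod>i<n. x i ^ a i) * x n ^ k)"
    by (simp add: sum.cartesian_product[symmetric] prod_upd mult.assoc)
  also have "\<dots> = (\<Sum>k<q. (\<Sum>a\<in>bounded_exps q n. c (a(n := k)) * (\<Prod>i<n. x i ^ a i)) * x n ^ k)"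
    by (subst sum.swap) (simp add: sum_distrib_right)
  finally show ?thesis .
qed

lemma coeffs_zero_if_vanishes_bounded_exps:
  fixes c :: "(nat \<Rightarrow> nat) \<Rightarrow> 'a::{finite,field}"
  assumes "\<And>x. (\<Sum>a\<in>bounded_exps CARD('a) n. c a * (\<Prod>i<n. x i ^ a i)) = 0"
    and "a \<in> bounded_exps CARD('a) n"
  shows "c a = 0"
  using assms
proof (induction n arbitrary: c a)
  case 0
  have "bounded_exps CARD('a) 0 = {\<lambda>_. 0}" by (auto simp: bounded_exps_def)
  then show ?case using 0 by simp
next
  case (Suc n)
  let ?q = "CARD('a)"
  have slice: "(\<Sum>b\<in>bounded_exps ?q n. c (b(n := k)) * (\<Prod>i<n. y i ^ b i)) = 0"
    if "k < ?q" for k y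
  proof (rule coeffs_zero_if_vanishes_univariate[OF _ that])
    fix t
    have prod_upd: "(\<Prod>i<n. (y(n := t)) i ^ b i) = (\<Prod>i<n. y i ^ b i)" for b
      by (rule prod.cong) auto
    show "(\<Sum>k<?q. (\<Sum>b\<in>bounded_exps ?q n. c (b(n := k)) * (\<Prod>i<n. y i ^ b i)) * t ^ k) = 0"
      using Suc.prems(1)[of "y(n := t)"] unfolding sum_bounded_exps_Suc
      by (simp only: prod_upd fun_upd_same)
  qed
  have "a(n := 0) \<in> bounded_exps ?q n" "a n < ?q"
    using Suc.prems(2) by (auto simp: bounded_exps_def)
  then have "c ((a(n := 0))(n := a n)) = 0"
    using Suc.IH[of "\<lambda>b. c (b(n := a n))"] slice by blast
  then show ?case by simp
qed

lemma coeffs_zero_if_vanishes: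
  fixes c :: "'b \<Rightarrow> 'a::{finite,field}" and e :: "'b \<Rightarrow> nat \<Rightarrow> nat"
  assumes "finite S" and inj: "inj_on e S" and bounded: "e ` S \<subseteq> bounded_exps CARD('a) n"
    and vanish: "\<And>x. (\<Sum>s\<in>S. c s * (\<Prod>i<n. x i ^ e s i)) = 0"
    and "s \<in> S"
  shows "c s = 0"
proof -
  define c' where "c' a = (if a \<in> e ` S then c (the_inv_into S e a) else 0)" for a
  have "(\<Sum>a\<in>bounded_exps CARD('a) n. c' a * (\<Prod>i<n. x i ^ a i)) = 0" for x :: "nat \<Rightarrow> 'a"
  proof -
    have "(\<Sum>a\<in>bounded_exps CARD('a) n. c' a * (\<Prod>i<n. x i ^ a i)) = (\<Sum>a\<in>e ` S. c' a * (\<Prod>i<n. x i ^ a i))"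
      using finite_bounded_exps bounded by (intro sum.mono_neutral_right) (auto simp: c'_def)
    also have "\<dots> = (\<Sum>s\<in>S. c s * (\<Prod>i<n. x i ^ e s i))"
      by (simp add: sum.reindex[OF inj] c'_def the_inv_into_f_f[OF inj])
    finally show ?thesis using vanish by simp
  qed
  then have "c' (e s) = 0"
    using coeffs_zero_if_vanishes_bounded_exps bounded \<open>s \<in> S\<close> by blast
  then show ?thesis
    using \<open>s \<in> S\<close> by (simp add: c'_def the_inv_into_f_f[OF inj])
qed

lemma Mon_sum_atMost_support:
  assumes "b \<in> Mon d m" "\<forall>j>l. b j = 0"
  shows "(\<Sum>i\<le>l. b i) = d"
proof -
  have "(\<Sum>i\<le>l. b i) = (\<Sum>i\<le>m + l. b i)"
    by (rule sum.mono_neutral_left) (use assms in auto)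
  also have "\<dots> = (\<Sum>i\<le>m. b i)"
    by (rule sum.mono_neutral_right) (use assms in \<open>auto simp: Mon_def\<close>)
  finally show ?thesis
    using assms by (simp add: Mon_def)
qed

lemma inj_on_truncate_Mon:
  assumes "S \<subseteq> Mon d m" and support: "\<And>s j. s \<in> S \<Longrightarrow> l < j \<Longrightarrow> s j = 0"
  shows "inj_on (\<lambda>s i. if i < l then s i else 0) S"
proof (rule inj_onI)
  fix s s' assume s: "s \<in> S" and s': "s' \<in> S"
    and eq: "(\<lambda>i. if i < l then s i else 0) = (\<lambda>i. if i < l then s' i else 0)"
  have below: "s i = s' i" if "i < l" for i
    using fun_cong[OF eq, of i] that by simp
  have "s \<in> Mon d m" "s' \<in> Mon d m" "\<forall>j>l. s j = 0" "\<forall>j>l. s' j = 0"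
    using s s' assms by auto
  then have "(\<Sum>i\<le>l. s i) = (\<Sum>i\<le>l. s' i)"
    by (simp add: Mon_sum_atMost_support)
  then have "(\<Sum>i<l. s i) + s l = (\<Sum>i<l. s' i) + s' l"
    by (simp add: lessThan_Suc_atMost[symmetric])
  then have "s l = s' l"
    using below by simp
  show "s = s'"
  proof
    fix i
    show "s i = s' i"
      using below \<open>s l = s' l\<close> support[OF s] support[OF s'] by (cases i l rule: linorder_cases) auto
  qed
qed

definition chart_point :: "nat \<Rightarrow> (nat \<Rightarrow> 'a) \<Rightarrow> nat \<Rightarrow> 'a::zero_neq_one" where
  "chart_point l y = (\<lambda>i. if i < l then y i else if i = l then 1 else 0)"

lemma prod_power_chart_point:
  fixes y :: "nat \<Rightarrow> 'a::comm_semiring_1"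
  assumes "\<forall>j>l. s j = 0" "\<forall>j>m. s j = 0"
  shows "(\<Prod>i\<le>m. chart_point l y i ^ s i) = (\<Prod>i<l. y i ^ s i)"
proof -
  have "(\<Prod>i\<le>m. chart_point l y i ^ s i) = (\<Prod>i\<le>m + l. chart_point l y i ^ s i)"
    using assms(2) by (intro prod.mono_neutral_left) auto
  also have "\<dots> = (\<Prod>i<l. chart_point l y i ^ s i)"
    using assms(1) by (intro prod.mono_neutral_right) (auto simp: chart_point_def)
  also have "\<dots> = (\<Prod>i<l. y i ^ s i)"
    by (rule prod.cong) (auto simp: chart_point_def)
  finally show ?thesis .
qed

lemma prod_power_chart_point_eq_0:
  fixes y :: "nat \<Rightarrow> 'a::comm_semiring_1"
  assumes "l < j" "j \<le> m" "s j \<noteq> 0"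
  shows "(\<Prod>i\<le>m. chart_point l y i ^ s i) = 0"
proof -
  have "chart_point l y j ^ s j = 0"
    using assms by (simp add: chart_point_def power_0_left)
  with assms(2) show ?thesis
    by (intro prod_zero) auto
qed

(* Evaluating at points of the affine chart x_l = 1, x_j = 0 (j > l) kills every monomial
   involving a variable beyond x_l; the surviving ones are determined by their exponents below l
   because the degree is fixed. *)

lemma hom_vanishing_coeff_eq_0:
  fixes f :: "(nat \<Rightarrow> nat) \<Rightarrow> 'a::{finite,field}"
  assumes hom: "f \<in> hom_polys d m" and vanish: "\<And>x. peval m f x = 0"
    and bounded: "\<And>b i. f b \<noteq> 0 \<Longrightarrow> \<forall>j>l. b j = 0 \<Longrightarrow> i < l \<Longrightarrow> b i < CARD('a)"
    and b: "\<forall>j>l. b j = 0"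
  shows "f b = 0"
proof -
  define S where "S = {b. f b \<noteq> 0 \<and> (\<forall>j>l. b j = 0)}"
  define trunc where "trunc b = (\<lambda>i. if i < l then b i else 0)" for b :: "nat \<Rightarrow> nat"
  have S_Mon: "S \<subseteq> Mon d m"
    using hom by (auto simp: S_def hom_polys_def)
  have inj: "inj_on trunc S"
    unfolding trunc_def by (rule inj_on_truncate_Mon[OF S_Mon]) (auto simp: S_def)
  have bounded': "trunc ` S \<subseteq> bounded_exps CARD('a) l"
    using bounded by (auto simp: S_def trunc_def bounded_exps_def)
  have "(\<Sum>s\<in>S. f s * (\<Prod>i<l. y i ^ trunc s i)) = 0" for y
  proof -
    have off_S: "f s * (\<Prod>i\<le>m. chart_point l y i ^ s i) = 0" if s: "s \<in> Mon d m - S" for s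
    proof (cases "f s = 0")
      case False
      then obtain j where "l < j" "s j \<noteq> 0"
        using s by (auto simp: S_def)
      moreover have "j \<le> m"
        using s Mon_nonzero_le \<open>s j \<noteq> 0\<close> by blast
      ultimately show ?thesis
        by (simp add: prod_power_chart_point_eq_0)
    qed simp
    have on_S: "(\<Prod>i\<le>m. chart_point l y i ^ s i) = (\<Prod>i<l. y i ^ trunc s i)" if s: "s \<in> S" for s
    proof -
      have "\<forall>j>m. s j = 0"
        using s S_Mon by (auto simp: Mon_def)
      then have "(\<Prod>i\<le>m. chart_point l y i ^ s i) = (\<Prod>i<l. y i ^ s i)"
        using s by (intro prod_power_chart_point) (auto simp: S_def)
      also have "\<dots> = (\<Prod>i<l. y i ^ trunc s i)"
        by (rule prod.cong) (simp_all add: trunc_def)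
      finally show ?thesis .
    qed
    have "0 = peval m f (chart_point l y)"
      using vanish by simp
    also have "\<dots> = (\<Sum>s\<in>Mon d m. f s * (\<Prod>i\<le>m. chart_point l y i ^ s i))"
      by (rule peval_hom[OF hom])
    also have "\<dots> = (\<Sum>s\<in>S. f s * (\<Prod>i\<le>m. chart_point l y i ^ s i))"
      using off_S by (intro sum.mono_neutral_right[OF finite_Mon S_Mon]) blast
    also have "\<dots> = (\<Sum>s\<in>S. f s * (\<Prod>i<l. y i ^ trunc s i))"
      using on_S by simp
    finally show ?thesis by simp
  qed
  from coeffs_zero_if_vanishes[OF finite_subset[OF S_Mon finite_Mon] inj bounded' this]
  show "f b = 0"
    using b by (auto simp: S_def)
qed

lemma reduced_hom_vanishing_eq_zero:
  fixes f :: "(nat \<Rightarrow> nat) \<Rightarrow> 'a::{finite,field}"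
  assumes hom: "f \<in> hom_polys d m" and reduced: "f \<in> proj_reduced_polys CARD('a)"
    and vanish: "\<And>x. peval m f x = 0"
  shows "f = 0"
proof -
  have "\<forall>b. (\<forall>j>l. b j = 0) \<longrightarrow> f b = 0" for l
  proof (induction l)
    case 0
    show ?case
      using hom_vanishing_coeff_eq_0[OF hom vanish, of 0] by blast
  next
    case (Suc l)
    have "b i < CARD('a)" if b: "f b \<noteq> 0" "\<forall>j>Suc l. b j = 0" and i: "i < Suc l" for b i
    proof -
      have "0 < b (Suc l)"
      proof (rule ccontr)
        assume "\<not> 0 < b (Suc l)"
        then have "\<forall>j>l. b j = 0"
          using b(2) by (metis Suc_lessI gr0I)
        then show False
          using Suc.IH b(1) by blast
      qed
      then have "b i \<le> CARD('a) - 1"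
        using reduced b(1) i by (auto simp: proj_reduced_polys_def proj_reduced_mon_def)
      then show ?thesis
        using two_le_card_field[where 'a='a] by linarith
    qed
    then show ?case
      using hom_vanishing_coeff_eq_0[OF hom vanish] by blast
  qed
  moreover have "\<forall>j>m. b j = 0" if "f b \<noteq> 0" for b
    using hom that by (auto simp: hom_polys_def Mon_def)
  ultimately show "f = 0"
    by (auto simp: fun_eq_iff)
qed

lemma hom_reduced_Int_span_ideal_gens:
  "hom_polys d m \<inter> proj_reduced_polys CARD('a) \<inter> V.span (ideal_gens TYPE('a::{finite,field}) d m) \<subseteq> {0}"
  using span_ideal_gens_vanish reduced_hom_vanishing_eq_zero by blast

section \<open>Independent sets modulo a subspace\<close>

context vector_space
begin

lemma independent_Un_if_span_Int_zero:
  assumes A: "independent A" "finite A" and B: "independent B" "finite B"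
    and trivial: "span A \<inter> span B \<subseteq> {0}"
  shows "A \<inter> B = {}" "independent (A \<union> B)"
proof -
  show disjoint: "A \<inter> B = {}"
  proof (rule ccontr)
    assume "A \<inter> B \<noteq> {}"
    then obtain v where "v \<in> A" "v \<in> B" by blast
    then have "v = 0"
      using trivial span_base by blast
    with \<open>v \<in> A\<close> A(1) show False
      using dependent_zero by blast
  qed
  show "independent (A \<union> B)"
  proof (rule independent_if_scalars_zero)
    fix u v assume sum0: "(\<Sum>x\<in>A \<union> B. u x *s x) = 0" and v: "v \<in> A \<union> B"
    let ?a = "\<Sum>x\<in>A. u x *s x" and ?b = "\<Sum>x\<in>B. u x *s x"
    have "?a + ?b = 0"
      using sum0 by (simp add: sum.union_disjoint[OF A(2) B(2) disjoint])
    then have "?a = - ?b"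
      by (simp add: eq_neg_iff_add_eq_0)
    moreover have "?a \<in> span A" "?b \<in> span B"
      using span_base by (auto intro!: span_sum span_scale)
    ultimately have "?a \<in> span A \<inter> span B"
      using span_neg by fastforce
    then have "?a = 0" "?b = 0"
      using trivial \<open>?a + ?b = 0\<close> by auto
    then show "u v = 0"
      using v independentD[OF A(1) A(2) subset_refl] independentD[OF B(1) B(2) subset_refl] by blast
  qed (use A B in simp)
qed

lemma independent_extend_by_subset:
  assumes B: "independent B" "finite B" and S: "independent S" "finite S"
    and card: "card B + r \<le> card S"
  obtains C where "C \<subseteq> S" "card C = r" "B \<inter> C = {}" "independent (B \<union> C)"
proof -
  obtain B' where B': "B \<subseteq> B'" "B' \<subseteq> B \<union> S" "independent B'" "B \<union> S \<subseteq> span B'"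
    using maximal_independent_subset_extend[of B "B \<union> S"] B(1) by blast
  have "finite B'"
    using B' B(2) S(2) finite_subset by blast
  then have "card S \<le> card B'"
    using independent_span_bound[of B' S] S(1) B'(4) by blast
  moreover have "card (B' - B) = card B' - card B"
    using B(2) B'(1) by (simp add: card_Diff_subset)
  ultimately have "r \<le> card (B' - B)"
    using card by linarith
  then obtain C where C: "C \<subseteq> B' - B" "card C = r"
    by (meson obtain_subset_with_card_n)
  have "C \<subseteq> S" "B \<inter> C = {}"
    using B'(2) C(1) by auto
  moreover have "independent (B \<union> C)"
    using B'(1) C(1) by (intro independent_mono[OF B'(3)]) auto
  ultimately show ?thesis
    using that C(2) by blast
qed

lemma span_Un_image_if_diff_in_span:
  assumes diff: "\<And>c. c \<in> C \<Longrightarrow> c - \<rho> c \<in> span B"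
  shows "span (B \<union> \<rho> ` C) = span (B \<union> C)"
  unfolding span_eq
proof
  have "\<rho> c \<in> span (B \<union> C)" if "c \<in> C" for c
  proof -
    have "c \<in> span (B \<union> C)"
      using that by (intro span_base) auto
    moreover have "c - \<rho> c \<in> span (B \<union> C)"
      using diff[OF that] span_mono[of B "B \<union> C"] by auto
    ultimately have "c - (c - \<rho> c) \<in> span (B \<union> C)"
      by (rule span_diff)
    then show ?thesis by simp
  qed
  then show "B \<union> \<rho> ` C \<subseteq> span (B \<union> C)"
    using span_superset by blast
  have "c \<in> span (B \<union> \<rho> ` C)" if "c \<in> C" for c
  proof -
    have "c - \<rho> c \<in> span (B \<union> \<rho> ` C)"
      using diff[OF that] span_mono[of B "B \<union> \<rho> ` C"] by auto
    moreover have "\<rho> c \<in> span (B \<union> \<rho> ` C)"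
      using that by (intro span_base) auto
    ultimately have "(c - \<rho> c) + \<rho> c \<in> span (B \<union> \<rho> ` C)"
      by (rule span_add)
    then show ?thesis by simp
  qed
  then show "B \<union> C \<subseteq> span (B \<union> \<rho> ` C)"
    using span_superset by blast
qed

lemma independent_image_if_diff_in_span:
  assumes indep: "independent (B \<union> C)" and disjoint: "B \<inter> C = {}" and fin: "finite (B \<union> C)"
    and diff: "\<And>c. c \<in> C \<Longrightarrow> c - \<rho> c \<in> span B"
  shows "independent (\<rho> ` C)" "card (\<rho> ` C) = card C"
proof -
  let ?B' = "B \<union> \<rho> ` C"
  obtain T where T: "T \<subseteq> ?B'" "independent T" "?B' \<subseteq> span T"
    by (rule maximal_independent_subset)
  have "span T = span ?B'"
    unfolding span_eq using T(1,3) span_superset[of ?B'] by blast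
  also have "\<dots> = span (B \<union> C)"
    by (rule span_Un_image_if_diff_in_span[OF diff])
  finally have "span T = span (B \<union> C)" .
  then have "card T = card B + card C"
    using dim_span_eq_card_independent[OF T(2)] dim_span_eq_card_independent[OF indep] fin disjoint
    by (simp add: card_Un_disjoint)
  moreover have "card ?B' \<le> card B + card (\<rho> ` C)"
    by (rule card_Un_le)
  moreover have "card (\<rho> ` C) \<le> card C"
    using card_image_le[of C \<rho>] fin by simp
  moreover have "card T \<le> card ?B'"
    using fin by (intro card_mono[OF _ T(1)]) simp
  ultimately have "card T = card ?B'" "card (\<rho> ` C) = card C"
    by linarith+
  then have "T = ?B'"
    using fin card_subset_eq[OF _ T(1)] by simp
  then show "independent (\<rho> ` C)"
    using T(2) by (metis independent_mono sup_ge2)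
  show "card (\<rho> ` C) = card C"
    by fact
qed

end

section \<open>Counting zeros of independent families\<close>

lemma Max_eq_if_subset_dominated:
  fixes A B :: "'a::linorder set"
  assumes "finite B" "A \<subseteq> B" "\<forall>b\<in>B. \<exists>a\<in>A. b \<le> a"
  shows "Max A = Max B"
proof (cases "B = {}")
  case False
  then have "A \<noteq> {}"
    using assms(3) by blast
  then have "Max A \<le> Max B"
    using Max_mono assms(1,2) by blast
  obtain a where a: "a \<in> A" "Max B \<le> a"
    using assms(3) Max_in[OF assms(1) False] by blast
  have "Max B \<le> Max A"
    using a(2) Max_ge[OF finite_subset[OF assms(2,1)] a(1)] by (rule order.trans)
  with \<open>Max A \<le> Max B\<close> show ?thesis by simp
qed (use assms(2) in simp)

definition common_zeros :: "nat \<Rightarrow> ((nat \<Rightarrow> nat) \<Rightarrow> 'a::field) set \<Rightarrow> (nat \<Rightarrow> 'a) set set" where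
  "common_zeros m A = {P \<in> proj_space m. \<forall>x\<in>P. \<forall>f\<in>A. peval m f x = 0}"

definition zero_counts :: "nat \<Rightarrow> nat \<Rightarrow> ((nat \<Rightarrow> nat) \<Rightarrow> 'a::field) set \<Rightarrow> nat set" where
  "zero_counts m s K = {card (common_zeros m A) | A. A \<subseteq> K \<and> V.independent A \<and> finite A \<and> card A = s}"

lemma finite_proj_space: "finite (proj_space m :: (nat \<Rightarrow> 'a::{finite,field}) set set)"
proof -
  have "finite {x :: nat \<Rightarrow> 'a. \<forall>i. (i \<in> {..m} \<longrightarrow> x i \<in> UNIV) \<and> (i \<notin> {..m} \<longrightarrow> x i = 0)}"
    by (intro finite_set_of_finite_funs) auto
  moreover have "proj_space m \<subseteq> Pow {x :: nat \<Rightarrow> 'a. \<forall>i. (i \<in> {..m} \<longrightarrow> x i \<in> UNIV) \<and> (i \<notin> {..m} \<longrightarrow> x i = 0)}"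
    by (auto simp: proj_space_def)
  ultimately show ?thesis
    by (meson finite_Pow_iff finite_subset)
qed

lemma finite_common_zeros: "finite (common_zeros m A :: (nat \<Rightarrow> 'a::{finite,field}) set set)"
  by (rule finite_subset[OF _ finite_proj_space]) (auto simp: common_zeros_def)

lemma finite_zero_counts: "finite (zero_counts m s (K :: ((nat \<Rightarrow> nat) \<Rightarrow> 'a::{finite,field}) set))"
proof (rule finite_subset)
  show "zero_counts m s K \<subseteq> card ` Pow (proj_space m :: (nat \<Rightarrow> 'a) set set)"
    by (auto simp: zero_counts_def common_zeros_def)
qed (simp add: finite_proj_space)

lemma zero_set_eq_common_zeros: "zero_set m s F = common_zeros m (F ` {..<s})"
  by (auto simp: zero_set_def common_zeros_def)

lemma lin_indep_family_iff_sum: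
  "lin_indep_family s F \<longleftrightarrow> (\<forall>c. (\<Sum>i<s. pscale (c i) (F i)) = 0 \<longrightarrow> (\<forall>i<s. c i = 0))"
  by (simp add: lin_indep_family_def fun_eq_iff sum_pscale_apply)

lemma lin_indep_family_imp_inj_on:
  fixes F :: "nat \<Rightarrow> (nat \<Rightarrow> nat) \<Rightarrow> 'a::field"
  assumes "lin_indep_family s F"
  shows "inj_on F {..<s}"
proof (rule inj_onI, rule ccontr)
  fix i j assume i: "i \<in> {..<s}" and j: "j \<in> {..<s}" and eq: "F i = F j" and "i \<noteq> j"
  define c :: "nat \<Rightarrow> 'a" where "c k = (if k = i then 1 else if k = j then -1 else 0)" for k
  have "pscale (c k) (F k) = (if k = i then F i else 0) - (if k = j then F j else 0)" for k
    using \<open>i \<noteq> j\<close> by (auto simp: c_def pscale_def fun_eq_iff)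
  then have "(\<Sum>k<s. pscale (c k) (F k)) = 0"
    using i j eq by (simp add: sum_subtractf)
  from assms[unfolded lin_indep_family_iff_sum, rule_format, OF this] i have "c i = 0"
    by simp
  then show False
    by (simp add: c_def)
qed

lemma sum_pscale_image:
  assumes "inj_on F {..<s}"
  shows "(\<Sum>v\<in>F ` {..<s}. pscale (u v) v) = (\<Sum>k<s. pscale (u (F k)) (F k))"
  using sum.reindex[OF assms, of "\<lambda>v. pscale (u v) v"] by (simp only: comp_def)

lemma lin_indep_family_iff:
  "lin_indep_family s F \<longleftrightarrow> inj_on F {..<s} \<and> V.independent (F ` {..<s})"
proof
  assume indep: "lin_indep_family s F"
  have inj: "inj_on F {..<s}"
    using indep by (rule lin_indep_family_imp_inj_on)
  moreover have "V.independent (F ` {..<s})"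
  proof
    assume "V.dependent (F ` {..<s})"
    then obtain u where u: "\<exists>v\<in>F ` {..<s}. u v \<noteq> 0" "(\<Sum>v\<in>F ` {..<s}. pscale (u v) v) = 0"
      using V.dependent_finite[OF finite_imageI[OF finite_lessThan]] by blast
    have "(\<Sum>k<s. pscale (u (F k)) (F k)) = 0"
      using u(2) unfolding sum_pscale_image[OF inj] .
    from indep[unfolded lin_indep_family_iff_sum, rule_format, OF this] u(1) show False
      by blast
  qed
  ultimately show "inj_on F {..<s} \<and> V.independent (F ` {..<s})" ..
next
  assume "inj_on F {..<s} \<and> V.independent (F ` {..<s})"
  then have inj: "inj_on F {..<s}" and indep: "V.independent (F ` {..<s})" by auto
  show "lin_indep_family s F"
    unfolding lin_indep_family_iff_sum
  proof (intro allI impI)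
    fix c i assume sum0: "(\<Sum>i<s. pscale (c i) (F i)) = 0" and i: "i < s"
    define u where "u v = c (the_inv_into {..<s} F v)" for v
    have u_F: "u (F k) = c k" if "k < s" for k
      using that by (simp add: u_def the_inv_into_f_f[OF inj])
    have "(\<Sum>v\<in>F ` {..<s}. pscale (u v) v) = (\<Sum>k<s. pscale (c k) (F k))"
      unfolding sum_pscale_image[OF inj] by (rule sum.cong) (simp_all add: u_F)
    then have "u (F i) = 0"
      using sum0 i by (intro V.independentD[OF indep, of "F ` {..<s}" u "F i"]) auto
    then show "c i = 0"
      using u_F[OF i] by simp
  qed
qed

lemma zero_set_cards_eq_zero_counts:
  "{card (zero_set m s F) | F. (\<forall>i<s. F i \<in> K) \<and> lin_indep_family s F} = zero_counts m s K"
proof (intro equalityI subsetI)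
  fix n assume "n \<in> {card (zero_set m s F) | F. (\<forall>i<s. F i \<in> K) \<and> lin_indep_family s F}"
  then obtain F where F: "\<forall>i<s. F i \<in> K" "lin_indep_family s F" and n: "n = card (zero_set m s F)"
    by blast
  then show "n \<in> zero_counts m s K"
    unfolding zero_counts_def zero_set_eq_common_zeros lin_indep_family_iff
    by (intro CollectI exI[of _ "F ` {..<s}"]) (auto simp: card_image)
next
  fix n assume "n \<in> zero_counts m s K"
  then obtain A where A: "A \<subseteq> K" "V.independent A" "finite A" "card A = s"
    and n: "n = card (common_zeros m A)"
    by (auto simp: zero_counts_def)
  obtain F where F: "bij_betw F {..<s} A"
    using ex_bij_betw_nat_finite[OF A(3)] A(4) by (auto simp: atLeast0LessThan)
  then have "F ` {..<s} = A" "inj_on F {..<s}"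
    by (auto simp: bij_betw_def)
  then show "n \<in> {card (zero_set m s F) | F. (\<forall>i<s. F i \<in> K) \<and> lin_indep_family s F}"
    using A n by (intro CollectI exI[of _ F]) (auto simp: zero_set_eq_common_zeros lin_indep_family_iff)
qed

lemma e_max_eq_Max_zero_counts:
  "e_max TYPE('a::{finite,field}) s d m = Max (zero_counts m s (hom_polys d m :: ((nat \<Rightarrow> nat) \<Rightarrow> 'a) set))"
  unfolding e_max_def zero_set_cards_eq_zero_counts ..

lemma e_bar_eq_Max_zero_counts:
  "e_bar TYPE('a::{finite,field}) s d m =
     Max (zero_counts m s (hom_polys d m \<inter> proj_reduced_polys CARD('a) :: ((nat \<Rightarrow> nat) \<Rightarrow> 'a) set))"
  unfolding e_bar_def Int_iff[symmetric] zero_set_cards_eq_zero_counts ..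

lemma common_zeros_image_subset:
  assumes "C \<subseteq> A" "C \<subseteq> hom_polys d m"
    and "\<And>c. c \<in> C \<Longrightarrow> \<rho> c \<in> hom_polys d m \<and> (\<forall>x. peval m (c - \<rho> c) x = 0)"
  shows "common_zeros m A \<subseteq> common_zeros m (\<rho> ` C)"
proof (clarsimp simp: common_zeros_def)
  fix P x c assume P: "\<forall>x\<in>P. \<forall>f\<in>A. peval m f x = 0" and x: "x \<in> P" and c: "c \<in> C"
  have hom: "c \<in> hom_polys d m" "\<rho> c \<in> hom_polys d m"
    using assms(2,3) c by auto
  have "peval m (\<rho> c) x = peval m c x - peval m (c - \<rho> c) x"
    by (simp add: peval_diff[OF hom])
  also have "\<dots> = 0"
    using P x c assms by auto
  finally show "peval m (\<rho> c) x = 0" .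
qed

lemma zero_countsI:
  assumes "A \<subseteq> K" "V.independent A" "finite A" "card A = s"
  shows "card (common_zeros m A) \<in> zero_counts m s K"
  using assms unfolding zero_counts_def by blast

lemma zero_counts_reduced_subset:
  "zero_counts m r (hom_polys d m \<inter> proj_reduced_polys CARD('a::{finite,field}) :: ((nat \<Rightarrow> nat) \<Rightarrow> 'a) set)
     \<subseteq> zero_counts m (r + r_dim TYPE('a) d m) (hom_polys d m :: ((nat \<Rightarrow> nat) \<Rightarrow> 'a) set)"
proof
  let ?H = "hom_polys d m :: ((nat \<Rightarrow> nat) \<Rightarrow> 'a) set"
  let ?R = "hom_polys d m \<inter> proj_reduced_polys CARD('a) :: ((nat \<Rightarrow> nat) \<Rightarrow> 'a) set"
  fix n assume "n \<in> zero_counts m r ?R"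
  then obtain A where A: "A \<subseteq> ?R" "V.independent A" "finite A" "card A = r"
    and n: "n = card (common_zeros m A)"
    unfolding zero_counts_def by blast
  obtain B :: "((nat \<Rightarrow> nat) \<Rightarrow> 'a) set"
    where B: "V.independent B" "finite B" "card B = r_dim TYPE('a) d m"
      "V.span B = V.span (ideal_gens TYPE('a) d m)"
    by (rule obtain_basis_span_ideal_gens)
  have "V.span A \<subseteq> ?R"
    by (rule V.span_minimal[OF A(1)])
      (intro V.subspace_inter subspace_hom_polys subspace_proj_reduced_polys)
  then have "V.span A \<inter> V.span B \<subseteq> {0}"
    using hom_reduced_Int_span_ideal_gens B(4) by blast
  from V.independent_Un_if_span_Int_zero[OF A(2,3) B(1,2) this]
  have disjoint: "A \<inter> B = {}" and indep: "V.independent (A \<union> B)" .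
  have B_vanish: "B \<subseteq> {f. f \<in> hom_polys d m \<and> (\<forall>x. peval m f x = 0)}"
    using V.span_superset[of B] B(4) span_ideal_gens_vanish by blast
  have "card (common_zeros m (A \<union> B)) \<in> zero_counts m (r + r_dim TYPE('a) d m) ?H"
  proof (rule zero_countsI[OF _ indep])
    show "A \<union> B \<subseteq> ?H"
      using A(1) B_vanish by blast
    show "finite (A \<union> B)"
      using A(3) B(2) by simp
    show "card (A \<union> B) = r + r_dim TYPE('a) d m"
      using A(3,4) B(2,3) disjoint by (simp add: card_Un_disjoint)
  qed
  moreover have "common_zeros m (A \<union> B) = common_zeros m A"
    using B_vanish by (auto simp: common_zeros_def)
  ultimately show "n \<in> zero_counts m (r + r_dim TYPE('a) d m) ?H"
    unfolding n by simp
qed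

lemma zero_counts_hom_le_reduced:
  assumes "n \<in> zero_counts m (r + r_dim TYPE('a::{finite,field}) d m) (hom_polys d m :: ((nat \<Rightarrow> nat) \<Rightarrow> 'a) set)"
  shows "\<exists>n' \<in> zero_counts m r (hom_polys d m \<inter> proj_reduced_polys CARD('a) :: ((nat \<Rightarrow> nat) \<Rightarrow> 'a) set).
           n \<le> n'"
proof -
  let ?R = "hom_polys d m \<inter> proj_reduced_polys CARD('a) :: ((nat \<Rightarrow> nat) \<Rightarrow> 'a) set"
  let ?I = "V.span (ideal_gens TYPE('a) d m)"
  obtain A :: "((nat \<Rightarrow> nat) \<Rightarrow> 'a) set"
    where A: "A \<subseteq> hom_polys d m" "V.independent A" "finite A" "card A = r + r_dim TYPE('a) d m"
      and n: "n = card (common_zeros m A)"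
    using assms unfolding zero_counts_def by blast
  obtain B :: "((nat \<Rightarrow> nat) \<Rightarrow> 'a) set"
    where B: "V.independent B" "finite B" "card B = r_dim TYPE('a) d m" "V.span B = ?I"
    by (rule obtain_basis_span_ideal_gens)
  have "card B + r \<le> card A"
    using A(4) B(3) by simp
  then obtain C where C: "C \<subseteq> A" "card C = r" "B \<inter> C = {}" "V.independent (B \<union> C)"
    by (rule V.independent_extend_by_subset[OF B(1,2) A(2,3)])
  define \<rho> where "\<rho> f = (SOME g. g \<in> ?R \<and> f - g \<in> ?I)" for f
  have \<rho>: "\<rho> f \<in> ?R \<and> f - \<rho> f \<in> ?I"
    if "f \<in> hom_polys d m" for f
    unfolding \<rho>_def using ex_reduced_congruent[OF that] by (rule someI2_bex) blast
  have fin: "finite (B \<union> C)"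
    using B(2) A(3) C(1) finite_subset by blast
  have "c - \<rho> c \<in> V.span B" if "c \<in> C" for c
    using \<rho> that C(1) A(1) B(4) by blast
  from V.independent_image_if_diff_in_span[OF C(4,3) fin this]
  have indep: "V.independent (\<rho> ` C)" and card: "card (\<rho> ` C) = r"
    using C(2) by auto
  have "common_zeros m A \<subseteq> common_zeros m (\<rho> ` C)"
    using C(1) A(1) \<rho> span_ideal_gens_vanish by (intro common_zeros_image_subset) blast+
  then have "n \<le> card (common_zeros m (\<rho> ` C))"
    unfolding n by (rule card_mono[OF finite_common_zeros])
  moreover have "card (common_zeros m (\<rho> ` C)) \<in> zero_counts m r ?R"
  proof (rule zero_countsI[OF _ indep _ card])
    show "\<rho> ` C \<subseteq> ?R"
      using \<rho> C(1) A(1) by blast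
    show "finite (\<rho> ` C)"
      using C(1) A(3) finite_subset by blast
  qed
  ultimately show ?thesis by blast
qed

lemma e_max_add_r_dim_eq_e_bar:
  "e_max TYPE('a::{finite,field}) (r + r_dim TYPE('a) d m) d m = e_bar TYPE('a) r d m"
  unfolding e_max_eq_Max_zero_counts e_bar_eq_Max_zero_counts
  by (rule Max_eq_if_subset_dominated[OF finite_zero_counts zero_counts_reduced_subset, symmetric])
    (use zero_counts_hom_le_reduced in blast)

theorem theorem5p2:
  fixes d r m :: nat
  assumes "1 \<le> m"
    and "r \<le> ((m + d) choose d) - r_dim TYPE('a::{finite,field}) d m"
  shows "e_max TYPE('a) (r + r_dim TYPE('a) d m) d m = e_bar TYPE('a) r d m
         \<and> (d \<le> CARD('a) \<longrightarrow> e_max TYPE('a) r d m = e_bar TYPE('a) r d m)"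
proof (intro conjI impI)
  show "e_max TYPE('a) (r + r_dim TYPE('a) d m) d m = e_bar TYPE('a) r d m"
    by (rule e_max_add_r_dim_eq_e_bar)
  assume "d \<le> CARD('a)"
  then show "e_max TYPE('a) r d m = e_bar TYPE('a) r d m"
    using e_max_add_r_dim_eq_e_bar[where 'a='a, of r d m] by (simp add: r_dim_eq_0)
qed

end
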